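(* Let $p$ be a prime and $q\in\mathbb{N}$, and let $n=pq$ or $n=pq+1$. Then the fixed point space $C_n(\mathbb{C})^{\mathbb{Z}/p}$ is homeomorphic to $C_q(\mathbb{C}^* )$.
   Context: $C_n(Y)$ denotes the unordered configuration space of $n$ distinct points in $Y$. The group $\mathbb{Z}/p$, generated by $\zeta=e^{2\pi i/p}$, acts on $C_n(\mathbb{C})$ by rotation: $\{z_1,\dots,z_n\}\mapsto\{\zeta z_1,\dots,\zeta z_n\}$. *)

theory Defs
  imports "HOL-Analysis.Analysis" "HOL-Computational_Algebra.Primes"
begin

definition quotient_topology_of :: "'a topology \<Rightarrow> ('a \<Rightarrow> 'b) \<Rightarrow> 'b topology" where
  "quotient_topology_of X f =
     topology (\<lambda>U. U \<subseteq> f ` topspace X \<and> openin X {x \<in> topspace X. f x \<in> U})"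

definition ord_conf :: "nat \<Rightarrow> 'a::topological_space set \<Rightarrow> (nat \<Rightarrow> 'a) topology" where
  "ord_conf n Y = subtopology (product_topology (\<lambda>i. subtopology euclidean Y) {..<n})
                     {f. inj_on f {..<n}}"

definition unord_conf :: "nat \<Rightarrow> 'a::topological_space set \<Rightarrow> 'a set topology" where
  "unord_conf n Y = quotient_topology_of (ord_conf n Y) (\<lambda>f. f ` {..<n})"

end

theory Submission
  imports Defs
begin

text \<open>
  Put \<zeta> = exp (2 \<pi> i / p). A configuration S invariant under z \<mapsto> \<zeta> z is a union of
  orbits {w, \<zeta> w, ..., \<zeta>^(p-1) w}; the orbit of a nonzero point has exactly p elements, so
  counting shows that S consists of q such orbits, together with the origin exactly when
  n = p q + 1. Hence S \<mapsto> {z^p | z \<in> S} - {0} is a bijection onto the configurations of q points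
  in \<complex> - {0}, whose inverse sends T to the set of all p-th roots of points of T (and the origin
  if n = p q + 1). Both maps are continuous because locally they lift to continuous maps between
  ordered configurations: in one direction by fixing one point from each orbit and taking p-th
  powers, in the other by choosing continuous branches of the p-th root near each point of T.
\<close>

section \<open>Quotient topology\<close>

lemma istopology_quotient_topology_of:
  "istopology (\<lambda>U. U \<subseteq> f ` topspace X \<and> openin X {x \<in> topspace X. f x \<in> U})"
  unfolding istopology_def
proof (rule conjI; intro allI impI)
  fix S T
  assume "S \<subseteq> f ` topspace X \<and> openin X {x \<in> topspace X. f x \<in> S}"
    and "T \<subseteq> f ` topspace X \<and> openin X {x \<in> topspace X. f x \<in> T}"
  moreover have "{x \<in> topspace X. f x \<in> S \<inter> T} = {x \<in> topspace X. f x \<in> S} \<inter> {x \<in> topspace X. f x \<in> T}"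
    by auto
  ultimately show "S \<inter> T \<subseteq> f ` topspace X \<and> openin X {x \<in> topspace X. f x \<in> S \<inter> T}"
    by auto
next
  fix K
  assume "\<forall>S\<in>K. S \<subseteq> f ` topspace X \<and> openin X {x \<in> topspace X. f x \<in> S}"
  moreover have "{x \<in> topspace X. f x \<in> \<Union>K} = (\<Union>S\<in>K. {x \<in> topspace X. f x \<in> S})"
    by auto
  ultimately show "\<Union>K \<subseteq> f ` topspace X \<and> openin X {x \<in> topspace X. f x \<in> \<Union>K}"
    by auto
qed

lemma openin_quotient_topology_of:
  "openin (quotient_topology_of X f) U \<longleftrightarrow>
     U \<subseteq> f ` topspace X \<and> openin X {x \<in> topspace X. f x \<in> U}"
  unfolding quotient_topology_of_def by (simp add: istopology_quotient_topology_of)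

lemma topspace_quotient_topology_of: "topspace (quotient_topology_of X f) = f ` topspace X"
proof (rule antisym)
  show "topspace (quotient_topology_of X f) \<subseteq> f ` topspace X"
    by (metis openin_quotient_topology_of openin_topspace)
  have "{x \<in> topspace X. f x \<in> f ` topspace X} = topspace X"
    by blast
  then show "f ` topspace X \<subseteq> topspace (quotient_topology_of X f)"
    by (metis openin_quotient_topology_of openin_subset openin_topspace subset_refl)
qed

lemma quotient_map_quotient_topology_of: "quotient_map X (quotient_topology_of X f) f"
  unfolding quotient_map_def topspace_quotient_topology_of openin_quotient_topology_of by auto

lemma continuous_map_into_quotient_topology_of:
  assumes "\<And>z. z \<in> topspace Z \<Longrightarrow> \<exists>W h. openin Z W \<and> z \<in> W \<and>
             continuous_map (subtopology Z W) X h \<and> (\<forall>w\<in>W. f (h w) = g w)"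
  shows "continuous_map Z (quotient_topology_of X f) g"
proof -
  obtain W h where W: "\<And>z. z \<in> topspace Z \<Longrightarrow> openin Z (W z) \<and> z \<in> W z \<and>
      continuous_map (subtopology Z (W z)) X (h z) \<and> (\<forall>w\<in>W z. f (h z w) = g w)"
    using assms by metis
  show ?thesis
  proof (rule pasting_lemma[where I = "topspace Z" and T = W and f = "\<lambda>z. f \<circ> h z"])
    fix z assume z: "z \<in> topspace Z"
    show "openin Z (W z)"
      using W[OF z] by blast
    show "continuous_map (subtopology Z (W z)) (quotient_topology_of X f) (f \<circ> h z)"
      using W[OF z] quotient_imp_continuous_map[OF quotient_map_quotient_topology_of]
      by (blast intro: continuous_map_compose)
    show "\<exists>j. j \<in> topspace Z \<and> z \<in> W j \<and> g z = (f \<circ> h j) z"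
      using W[OF z] z by auto
  next
    fix i j x assume "i \<in> topspace Z" "j \<in> topspace Z" "x \<in> topspace Z \<inter> W i \<inter> W j"
    then show "(f \<circ> h i) x = (f \<circ> h j) x"
      using W by simp
  qed
qed

lemma continuous_map_from_quotient_topology_of_closedin:
  assumes "closedin (quotient_topology_of X f) V"
    and "continuous_map (subtopology X {x \<in> topspace X. f x \<in> V}) Y (g \<circ> f)"
  shows "continuous_map (subtopology (quotient_topology_of X f) V) Y g"
  using quotient_map_restriction[OF quotient_map_quotient_topology_of _ disjI2[OF assms(1)]]
    assms(2) continuous_compose_quotient_map_eq by blast

lemma openin_Collect_finite_Ball:
  assumes "finite I" "\<And>i. i \<in> I \<Longrightarrow> openin X {x \<in> topspace X. P i x}"
  shows "openin X {x \<in> topspace X. \<forall>i\<in>I. P i x}"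
proof -
  have "{x \<in> topspace X. \<forall>i\<in>I. P i x} = (\<Inter>i\<in>I. {x \<in> topspace X. P i x}) \<inter> topspace X"
    by auto
  then show ?thesis
    using openin_INT[OF assms] by simp
qed

lemma openin_Collect_Bex:
  assumes "\<And>i. i \<in> I \<Longrightarrow> openin X {x \<in> topspace X. P i x}"
  shows "openin X {x \<in> topspace X. \<exists>i\<in>I. P i x}"
proof -
  have "{x \<in> topspace X. \<exists>i\<in>I. P i x} = (\<Union>i\<in>I. {x \<in> topspace X. P i x})"
    by auto
  then show ?thesis
    using assms by auto
qed

section \<open>Configuration spaces\<close>

lemma topspace_ord_conf:
  "topspace (ord_conf n Y) = {f \<in> {..<n} \<rightarrow>\<^sub>E Y. inj_on f {..<n}}"
  unfolding ord_conf_def by auto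

lemma continuous_map_ord_conf_coordinate:
  "k < n \<Longrightarrow> continuous_map (ord_conf n Y) (top_of_set Y) (\<lambda>f. f k)"
  unfolding ord_conf_def
  by (auto intro: continuous_map_from_subtopology continuous_map_product_projection)

lemma continuous_map_ord_conf_coordinate_compose:
  assumes "k < n" "continuous_on U \<phi>" "\<And>f. f \<in> topspace (ord_conf n Y) \<inter> W \<Longrightarrow> f k \<in> U"
  shows "continuous_map (subtopology (ord_conf n Y) W) euclidean (\<lambda>f. \<phi> (f k))"
proof -
  have "continuous_map (subtopology (ord_conf n Y) W) (top_of_set U) (\<lambda>f. f k)"
    using continuous_map_from_subtopology[OF continuous_map_ord_conf_coordinate[OF assms(1)]]
      assms(3) by (auto simp: continuous_map_in_subtopology)
  with assms(2) show ?thesis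
    using continuous_map_compose[unfolded o_def] continuous_map_iff_continuous by blast
qed

lemma continuous_map_ord_conf_coordinate_compose_UNIV:
  assumes "k < n" "continuous_on UNIV \<phi>"
  shows "continuous_map (ord_conf n Y) euclidean (\<lambda>f. \<phi> (f k))"
proof -
  have "continuous_map (top_of_set Y) euclidean \<phi>"
    using continuous_on_subset[OF assms(2)] by simp
  from continuous_map_compose[OF continuous_map_ord_conf_coordinate[OF assms(1)] this]
  show ?thesis
    by (simp add: o_def)
qed

lemma continuous_map_into_ord_conf:
  assumes "\<And>k. k < n \<Longrightarrow> continuous_map X (top_of_set Y) (\<lambda>x. \<phi> x k)"
    and "\<And>x. x \<in> topspace X \<Longrightarrow> inj_on (\<phi> x) {..<n}"
  shows "continuous_map X (ord_conf n Y) (\<lambda>x. restrict (\<phi> x) {..<n})"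
  unfolding ord_conf_def continuous_map_in_subtopology continuous_map_componentwise
  using assms by (auto simp: inj_on_def continuous_map_in_subtopology)

lemma openin_ord_conf_neq:
  fixes \<phi> \<psi> :: "'a::topological_space \<Rightarrow> 'b::metric_space"
  assumes "continuous_on UNIV \<phi>" "continuous_on UNIV \<psi>" "i < n" "j < n"
  shows "openin (ord_conf n Y) {f \<in> topspace (ord_conf n Y). \<phi> (f i) \<noteq> \<psi> (f j)}"
proof -
  let ?X = "ord_conf n Y"
  have "closedin ?X {f \<in> topspace ?X. \<phi> (f i) = \<psi> (f j)}"
    using assms by (intro closedin_continuous_maps_eq[OF Hausdorff_space_euclidean]
        continuous_map_ord_conf_coordinate_compose_UNIV)
  then have "openin ?X (topspace ?X - {f \<in> topspace ?X. \<phi> (f i) = \<psi> (f j)})"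
    by (simp add: closedin_def)
  moreover have "topspace ?X - {f \<in> topspace ?X. \<phi> (f i) = \<psi> (f j)} =
      {f \<in> topspace ?X. \<phi> (f i) \<noteq> \<psi> (f j)}"
    by blast
  ultimately show ?thesis
    by simp
qed

lemma openin_ord_conf_coordinates_in:
  assumes "\<And>j. j < n \<Longrightarrow> open (U j)"
  shows "openin (ord_conf n Y) {f \<in> topspace (ord_conf n Y). \<forall>j\<in>{..<n}. f j \<in> U j}"
proof (rule openin_Collect_finite_Ball)
  fix j assume "j \<in> {..<n}"
  then show "openin (ord_conf n Y) {f \<in> topspace (ord_conf n Y). f j \<in> U j}"
    using assms[of j] continuous_map_ord_conf_coordinate_compose_UNIV[of j n id Y]
    by (intro openin_continuous_map_preimage[where Y = euclidean]) auto
qed simp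

lemma openin_unord_conf:
  "openin (unord_conf n Y) U \<longleftrightarrow>
     U \<subseteq> topspace (unord_conf n Y) \<and> openin (ord_conf n Y) {f \<in> topspace (ord_conf n Y). f ` {..<n} \<in> U}"
  unfolding unord_conf_def openin_quotient_topology_of topspace_quotient_topology_of ..

lemma topspace_unord_conf: "topspace (unord_conf n Y) = {S. S \<subseteq> Y \<and> finite S \<and> card S = n}"
proof -
  have "S \<in> (\<lambda>f. f ` {..<n}) ` topspace (ord_conf n Y)" if "S \<subseteq> Y" "finite S" "card S = n" for S
  proof -
    have "\<exists>h. bij_betw h {..<n} S"
      using ex_bij_betw_nat_finite[of S] that by (simp add: atLeast0LessThan)
    then obtain h where h: "bij_betw h {..<n} S" ..
    then have "restrict h {..<n} \<in> topspace (ord_conf n Y)" "S = restrict h {..<n} ` {..<n}"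
      using that by (auto simp: topspace_ord_conf bij_betw_def inj_on_def)
    then show ?thesis by blast
  qed
  then show ?thesis
    unfolding unord_conf_def topspace_quotient_topology_of
    by (auto simp: topspace_ord_conf card_image)
qed

lemma image_eq_iff_maps_into_finite:
  assumes "inj \<sigma>" "finite S"
  shows "\<sigma> ` S = S \<longleftrightarrow> (\<forall>x\<in>S. \<sigma> x \<in> S)"
proof
  assume "\<forall>x\<in>S. \<sigma> x \<in> S"
  moreover have "card (\<sigma> ` S) = card S"
    using assms(1) by (simp add: card_image inj_on_subset)
  ultimately show "\<sigma> ` S = S"
    using card_subset_eq[OF assms(2)] by blast
qed auto

lemma closedin_unord_conf_invariant:
  fixes \<sigma> :: "'a::metric_space \<Rightarrow> 'a"
  assumes "continuous_on UNIV \<sigma>" "inj \<sigma>"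
  shows "closedin (unord_conf n Y) (topspace (unord_conf n Y) \<inter> {S. \<sigma> ` S = S})"
proof -
  let ?X = "ord_conf n Y" and ?C = "unord_conf n Y"
  have "f ` {..<n} \<in> topspace ?C - {S. \<sigma> ` S = S} \<longleftrightarrow>
      (\<exists>i\<in>{..<n}. \<forall>j\<in>{..<n}. \<sigma> (f i) \<noteq> f j)" if "f \<in> topspace ?X" for f
  proof -
    have "f ` {..<n} \<in> topspace ?C"
      using that by (auto simp: topspace_ord_conf topspace_unord_conf card_image)
    then show ?thesis
      using image_eq_iff_maps_into_finite[OF assms(2), of "f ` {..<n}"] by auto
  qed
  then have "{f \<in> topspace ?X. f ` {..<n} \<in> topspace ?C - {S. \<sigma> ` S = S}} =
      {f \<in> topspace ?X. \<exists>i\<in>{..<n}. \<forall>j\<in>{..<n}. \<sigma> (f i) \<noteq> f j}"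
    by (intro Collect_cong) blast
  moreover have "openin ?X {f \<in> topspace ?X. \<exists>i\<in>{..<n}. \<forall>j\<in>{..<n}. \<sigma> (f i) \<noteq> f j}"
    using assms(1) by (intro openin_Collect_Bex openin_Collect_finite_Ball openin_ord_conf_neq
        continuous_on_id) auto
  ultimately have "openin ?C (topspace ?C - {S. \<sigma> ` S = S})"
    by (simp add: openin_unord_conf)
  moreover have "topspace ?C - topspace ?C \<inter> {S. \<sigma> ` S = S} = topspace ?C - {S. \<sigma> ` S = S}"
    by blast
  ultimately show ?thesis
    by (simp add: closedin_def)
qed

lemma openin_ord_conf_distinct_values:
  fixes \<phi> :: "'a::topological_space \<Rightarrow> 'b::metric_space"
  assumes \<phi>: "continuous_on UNIV \<phi>" and J: "finite J" "idx ` J \<subseteq> {..<n}"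
  shows "openin (ord_conf n Y) {f \<in> topspace (ord_conf n Y). \<forall>j\<in>J. \<phi> (f (idx j)) \<noteq> c \<and>
    (\<forall>j'\<in>J - {j}. \<phi> (f (idx j)) \<noteq> \<phi> (f (idx j')))}"
proof (rule openin_Collect_finite_Ball[OF J(1)])
  let ?X = "ord_conf n Y"
  fix j assume "j \<in> J"
  have neq_c: "openin ?X {f \<in> topspace ?X. \<phi> (f (idx j)) \<noteq> c}"
    using openin_ord_conf_neq[of \<phi> "\<lambda>_. c" "idx j" n "idx j" Y] \<phi> J(2) \<open>j \<in> J\<close> by auto
  have distinct: "openin ?X {f \<in> topspace ?X. \<forall>j'\<in>J - {j}. \<phi> (f (idx j)) \<noteq> \<phi> (f (idx j'))}"
    using \<phi> J \<open>j \<in> J\<close> by (intro openin_Collect_finite_Ball openin_ord_conf_neq) auto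
  have "{f \<in> topspace ?X. \<phi> (f (idx j)) \<noteq> c \<and> (\<forall>j'\<in>J - {j}. \<phi> (f (idx j)) \<noteq> \<phi> (f (idx j')))} =
      {f \<in> topspace ?X. \<phi> (f (idx j)) \<noteq> c} \<inter>
      {f \<in> topspace ?X. \<forall>j'\<in>J - {j}. \<phi> (f (idx j)) \<noteq> \<phi> (f (idx j'))}"
    by blast
  with openin_Int[OF neq_c distinct]
  show "openin ?X {f \<in> topspace ?X. \<phi> (f (idx j)) \<noteq> c \<and>
      (\<forall>j'\<in>J - {j}. \<phi> (f (idx j)) \<noteq> \<phi> (f (idx j')))}"
    by simp
qed

lemma unord_conf_image_minus_local_lift:
  fixes \<phi> :: "'a::metric_space \<Rightarrow> 'b::metric_space"
  assumes \<phi>: "continuous_on UNIV \<phi>"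
    and f0: "f0 \<in> topspace (ord_conf n Y)" and card: "card (\<phi> ` f0 ` {..<n} - {c}) = q"
  obtains W h where "openin (ord_conf n Y) W" "f0 \<in> W"
    "continuous_map (subtopology (ord_conf n Y) W) (ord_conf q (- {c})) h"
    "\<And>f. f \<in> W \<Longrightarrow> card (\<phi> ` f ` {..<n} - {c}) = q \<Longrightarrow> h f ` {..<q} = \<phi> ` f ` {..<n} - {c}"
proof -
  let ?X = "ord_conf n Y"
  have "\<exists>b. bij_betw b {..<q} (\<phi> ` f0 ` {..<n} - {c})"
    using ex_bij_betw_nat_finite[of "\<phi> ` f0 ` {..<n} - {c}"] card by (simp add: atLeast0LessThan)
  then obtain b where b: "bij_betw b {..<q} (\<phi> ` f0 ` {..<n} - {c})" ..
  define idx where "idx j = inv_into {..<n} (\<lambda>i. \<phi> (f0 i)) (b j)" for j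
  have idx: "idx j < n \<and> \<phi> (f0 (idx j)) = b j" if "j < q" for j
  proof -
    have "b j \<in> (\<lambda>i. \<phi> (f0 i)) ` {..<n}"
      using bij_betwE[OF b] that by (simp add: image_image)
    then show ?thesis
      unfolding idx_def using inv_into_into f_inv_into_f by (metis lessThan_iff)
  qed
  define W where "W = {f \<in> topspace ?X. \<forall>j\<in>{..<q}. \<phi> (f (idx j)) \<noteq> c \<and>
    (\<forall>j'\<in>{..<q} - {j}. \<phi> (f (idx j)) \<noteq> \<phi> (f (idx j')))}"
  define h where "h f = restrict (\<lambda>j. \<phi> (f (idx j))) {..<q}" for f
  have inj: "inj_on (\<lambda>j. \<phi> (f (idx j))) {..<q}" if "f \<in> W" for f
    using that by (auto simp: W_def inj_on_def)
  have "openin ?X W"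
    unfolding W_def using \<phi> idx by (intro openin_ord_conf_distinct_values) auto
  moreover have "f0 \<in> W"
    using f0 idx b by (auto simp: W_def bij_betw_def inj_on_def)
  moreover have "continuous_map (subtopology ?X W) (ord_conf q (- {c})) h"
    unfolding h_def
  proof (rule continuous_map_into_ord_conf)
    fix j assume "j < q"
    then have "continuous_map (subtopology ?X W) euclidean (\<lambda>f. \<phi> (f (idx j)))"
      using idx \<phi> by (intro continuous_map_ord_conf_coordinate_compose[where U = UNIV]) auto
    moreover have "\<phi> (f (idx j)) \<noteq> c" if "f \<in> topspace (subtopology ?X W)" for f
      using that \<open>j < q\<close> by (auto simp: W_def)
    ultimately show "continuous_map (subtopology ?X W) (top_of_set (- {c})) (\<lambda>f. \<phi> (f (idx j)))"
      by (auto simp: continuous_map_in_subtopology)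
  qed (use inj in auto)
  moreover have "h f ` {..<q} = \<phi> ` f ` {..<n} - {c}"
    if "f \<in> W" "card (\<phi> ` f ` {..<n} - {c}) = q" for f
    using that idx inj[OF that(1)] by (intro card_subset_eq) (auto simp: h_def W_def card_image)
  ultimately show ?thesis
    using that by blast
qed

lemma continuous_map_unord_conf_image_minus:
  fixes \<phi> :: "'a::metric_space \<Rightarrow> 'b::metric_space"
  assumes \<phi>: "continuous_on UNIV \<phi>"
    and V: "closedin (unord_conf n Y) V"
    and card: "\<And>S. S \<in> V \<Longrightarrow> card (\<phi> ` S - {c}) = q"
  shows "continuous_map (subtopology (unord_conf n Y) V) (unord_conf q (- {c})) (\<lambda>S. \<phi> ` S - {c})"
proof -
  let ?X = "ord_conf n Y"
  let ?P = "{f \<in> topspace ?X. f ` {..<n} \<in> V}"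
  have "continuous_map (subtopology ?X ?P) (unord_conf q (- {c})) (\<lambda>f. \<phi> ` f ` {..<n} - {c})"
    unfolding unord_conf_def[of q]
  proof (rule continuous_map_into_quotient_topology_of)
    fix f0 assume "f0 \<in> topspace (subtopology ?X ?P)"
    then have f0: "f0 \<in> topspace ?X" "f0 ` {..<n} \<in> V"
      by auto
    obtain W h where W: "openin ?X W" "f0 \<in> W"
      and h: "continuous_map (subtopology ?X W) (ord_conf q (- {c})) h"
      and lift: "\<And>f. f \<in> W \<Longrightarrow> card (\<phi> ` f ` {..<n} - {c}) = q \<Longrightarrow> h f ` {..<q} = \<phi> ` f ` {..<n} - {c}"
      using unord_conf_image_minus_local_lift[OF \<phi> f0(1) card[OF f0(2)]] by blast
    have "openin (subtopology ?X ?P) (?P \<inter> W)"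
      using W(1) by (simp add: openin_subtopology_Int2)
    moreover have "continuous_map (subtopology (subtopology ?X ?P) (?P \<inter> W)) (ord_conf q (- {c})) h"
      using continuous_map_from_subtopology_mono[OF h] by (simp add: subtopology_subtopology)
    moreover have "\<forall>f\<in>?P \<inter> W. h f ` {..<q} = \<phi> ` f ` {..<n} - {c}"
      using lift[OF _ card] by simp
    ultimately show "\<exists>W h. openin (subtopology ?X ?P) W \<and> f0 \<in> W \<and>
        continuous_map (subtopology (subtopology ?X ?P) W) (ord_conf q (- {c})) h \<and>
        (\<forall>f\<in>W. h f ` {..<q} = \<phi> ` f ` {..<n} - {c})"
      using f0 W(2) by blast
  qed
  then show ?thesis
    using continuous_map_from_quotient_topology_of_closedin[of ?X "\<lambda>f. f ` {..<n}" V] V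
    by (simp add: unord_conf_def o_def)
qed

section \<open>Sets invariant under rotation by a root of unity\<close>

definition zeta :: "nat \<Rightarrow> complex" where
  "zeta p = exp (2 * of_real pi * \<i> / of_nat p)"

lemma zeta_nonzero [simp]: "zeta p \<noteq> 0"
  by (simp add: zeta_def)

lemma zeta_power: "zeta p ^ j = exp (2 * of_real pi * \<i> * of_nat j / of_nat p)"
  unfolding zeta_def exp_of_nat_mult[symmetric] by (simp add: field_simps)

lemma zeta_power_self: "p \<noteq> 0 \<Longrightarrow> zeta p ^ p = 1"
  by (simp add: zeta_power)

lemma power_zeta_power_mult:
  assumes "p \<noteq> 0"
  shows "(zeta p ^ j * z) ^ p = z ^ p"
proof -
  have "(zeta p ^ j) ^ p = (zeta p ^ p) ^ j"
    by (simp flip: power_mult add: mult.commute)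
  then show ?thesis
    by (simp add: power_mult_distrib zeta_power_self[OF assms])
qed

lemma zeta_power_inj: "i < p \<Longrightarrow> j < p \<Longrightarrow> zeta p ^ i = zeta p ^ j \<Longrightarrow> i = j"
  unfolding zeta_power by (simp add: complex_root_unity_eq)

lemma power_eq_power_iff_zeta:
  assumes "p \<noteq> 0" "w \<noteq> 0"
  shows "z ^ p = w ^ p \<longleftrightarrow> (\<exists>j<p. z = zeta p ^ j * w)"
proof
  assume "z ^ p = w ^ p"
  then have "(z / w) ^ p = 1"
    using assms by (simp add: power_divide)
  then obtain j where "j < p" "z / w = zeta p ^ j"
    using complex_roots_unity[of p] assms(1) by (auto simp: zeta_power)
  then show "\<exists>j<p. z = zeta p ^ j * w"
    using assms(2) by (auto simp: field_simps)
qed (use assms power_zeta_power_mult in blast)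

lemma exp_Ln_divide_power: "p \<noteq> 0 \<Longrightarrow> w \<noteq> 0 \<Longrightarrow> exp (Ln w / of_nat p) ^ p = w"
  by (simp flip: exp_of_nat_mult)

lemma zeta_power_mult_mem:
  assumes "(\<lambda>z. zeta p * z) ` S = S" "z \<in> S"
  shows "zeta p ^ j * z \<in> S"
proof (induction j)
  case (Suc j)
  then have "zeta p * (zeta p ^ j * z) \<in> S"
    using assms(1) by blast
  then show ?case
    by (simp add: mult.assoc)
qed (use assms in simp)

lemma vimage_power_image_invariant:
  assumes "p \<noteq> 0" "(\<lambda>z. zeta p * z) ` S = S"
  shows "(\<lambda>z. z ^ p) -` ((\<lambda>z. z ^ p) ` S - {0}) = S - {0}"
proof (intro equalityI subsetI)
  fix z assume "z \<in> (\<lambda>z. z ^ p) -` ((\<lambda>z. z ^ p) ` S - {0})"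
  then have "z ^ p \<in> (\<lambda>z. z ^ p) ` S" "z ^ p \<noteq> 0"
    by auto
  then obtain w where w: "w \<in> S" "z ^ p = w ^ p"
    by auto
  then have "w \<noteq> 0" "z \<noteq> 0"
    using assms(1) \<open>z ^ p \<noteq> 0\<close> by (auto simp: power_0_left)
  then obtain j where "z = zeta p ^ j * w"
    using power_eq_power_iff_zeta[OF assms(1)] w(2) by blast
  then show "z \<in> S - {0}"
    using zeta_power_mult_mem[OF assms(2) w(1)] \<open>z \<noteq> 0\<close> by simp
qed (use assms(1) in auto)

lemma power_fibre_invariant:
  assumes "p \<noteq> 0" "(\<lambda>z. zeta p * z) ` S = S" "w \<in> S" "w \<noteq> 0"
  shows "{z \<in> S. z ^ p = w ^ p} = (\<lambda>j. zeta p ^ j * w) ` {..<p}"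
proof (intro equalityI subsetI)
  fix z assume "z \<in> {z \<in> S. z ^ p = w ^ p}"
  then show "z \<in> (\<lambda>j. zeta p ^ j * w) ` {..<p}"
    using power_eq_power_iff_zeta[OF assms(1,4)] by auto
next
  fix z assume "z \<in> (\<lambda>j. zeta p ^ j * w) ` {..<p}"
  then obtain j where "z = zeta p ^ j * w"
    by blast
  then show "z \<in> {z \<in> S. z ^ p = w ^ p}"
    using zeta_power_mult_mem[OF assms(2,3)] power_zeta_power_mult[OF assms(1)] by simp
qed

lemma card_zeta_orbit: "w \<noteq> 0 \<Longrightarrow> card ((\<lambda>j. zeta p ^ j * w) ` {..<p}) = p"
  by (subst card_image) (auto simp: inj_on_def intro: zeta_power_inj)

lemma card_invariant_eq:
  assumes "p \<noteq> 0" "finite S" "(\<lambda>z. zeta p * z) ` S = S"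
  shows "card (S - {0}) = p * card ((\<lambda>z. z ^ p) ` S - {0})"
proof -
  let ?A = "S - {0}"
  have image: "(\<lambda>z. z ^ p) ` S - {0} = (\<lambda>z. z ^ p) ` ?A"
    using assms(1) by auto
  have "card ?A = (\<Sum>v\<in>(\<lambda>z. z ^ p) ` ?A. card {z \<in> ?A. z ^ p = v})"
    using sum.image_gen[of ?A "\<lambda>_. 1 :: nat" "\<lambda>z. z ^ p"] assms(2) by simp
  also have "\<dots> = (\<Sum>v\<in>(\<lambda>z. z ^ p) ` ?A. p)"
  proof (rule sum.cong)
    fix v assume "v \<in> (\<lambda>z. z ^ p) ` ?A"
    then obtain w where w: "w \<in> S" "w \<noteq> 0" "v = w ^ p"
      by blast
    then have "{z \<in> ?A. z ^ p = v} = {z \<in> S. z ^ p = w ^ p}"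
      using assms(1) by (auto simp: power_0_left)
    then show "card {z \<in> ?A. z ^ p = v} = p"
      using power_fibre_invariant[OF assms(1,3) w(1,2)] card_zeta_orbit[OF w(2)] by simp
  qed simp
  finally show ?thesis
    by (simp add: image)
qed

lemma card_invariant_configuration:
  assumes "2 \<le> p" "n = p * q \<or> n = p * q + 1"
    and "finite S" "card S = n" "(\<lambda>z. zeta p * z) ` S = S"
  shows "card ((\<lambda>z. z ^ p) ` S - {0}) = q" "0 \<in> S \<longleftrightarrow> n = p * q + 1"
proof -
  define m where "m = card ((\<lambda>z. z ^ p) ` S - {0})"
  define b :: nat where "b = (if 0 \<in> S then 1 else 0)"
  obtain e :: nat where e: "e < 2" "n = p * q + e"
    using assms(2) by force
  have "card S = card (S - {0}) + b"
    using assms(3) card.remove[of S 0] by (auto simp: b_def)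
  then have "p * m + b = p * q + e"
    using card_invariant_eq[OF _ assms(3,5)] assms(1,4) e(2) by (simp add: m_def)
  moreover have "b < p" "e < p"
    using assms(1) e(1) by (auto simp: b_def)
  ultimately have "(p * m + b) div p = (p * q + e) div p" "(p * m + b) mod p = (p * q + e) mod p"
    by simp_all
  with \<open>b < p\<close> \<open>e < p\<close> have "m = q" "b = e"
    by simp_all
  then show "card ((\<lambda>z. z ^ p) ` S - {0}) = q" "0 \<in> S \<longleftrightarrow> n = p * q + 1"
    using e by (auto simp: m_def b_def split: if_splits)
qed

lemma vimage_power_image_invariant_configuration:
  assumes "2 \<le> p" "n = p * q \<and> Z = {} \<or> n = p * q + 1 \<and> Z = {0}"
    and "finite S" "card S = n" "(\<lambda>z. zeta p * z) ` S = S"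
  shows "(\<lambda>z. z ^ p) -` ((\<lambda>z. z ^ p) ` S - {0} \<union> Z) = S"
proof -
  have "n = p * q \<or> n = p * q + 1"
    using assms(2) by blast
  from card_invariant_configuration(2)[OF assms(1) this assms(3-5)]
  have "0 \<in> S \<longleftrightarrow> Z = {0}"
    using assms(2) by auto
  moreover have "(\<lambda>z. z ^ p) -` Z = Z"
    using assms(1,2) by auto
  moreover have "(\<lambda>z. z ^ p) -` ((\<lambda>z. z ^ p) ` S - {0}) = S - {0}"
    using vimage_power_image_invariant[OF _ assms(5)] assms(1) by simp
  ultimately show ?thesis
    using assms(2) by auto
qed

lemma power_image_vimage:
  fixes T Z :: "complex set"
  assumes "p \<noteq> 0" "0 \<notin> T" "Z \<subseteq> {0}"
  shows "(\<lambda>z. z ^ p) ` ((\<lambda>z. z ^ p) -` (T \<union> Z)) - {0} = T"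
proof (intro equalityI subsetI)
  fix w assume "w \<in> T"
  with assms have "exp (Ln w / of_nat p) ^ p = w"
    by (auto intro: exp_Ln_divide_power)
  with \<open>w \<in> T\<close> assms(2) show "w \<in> (\<lambda>z. z ^ p) ` ((\<lambda>z. z ^ p) -` (T \<union> Z)) - {0}"
    by (metis DiffI UnI1 image_eqI singletonD vimageI)
qed (use assms(3) in auto)

lemma zeta_invariant_vimage_power:
  assumes "p \<noteq> 0"
  shows "(\<lambda>z. zeta p * z) ` ((\<lambda>z. z ^ p) -` A) = (\<lambda>z. z ^ p) -` A"
proof (intro equalityI subsetI)
  fix z assume "z \<in> (\<lambda>z. z ^ p) -` A"
  moreover have "z = zeta p * (zeta p ^ (p - 1) * z)"
    using assms by (simp add: mult.assoc flip: power_Suc zeta_power_self[OF assms])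
  ultimately show "z \<in> (\<lambda>z. zeta p * z) ` ((\<lambda>z. z ^ p) -` A)"
    using power_zeta_power_mult[OF assms] by (metis image_eqI vimageE vimageI)
qed (use power_zeta_power_mult[OF assms, of 1] in auto)

section \<open>Continuity of the root map\<close>

text \<open>Given p-th roots r j of the points of an ordered configuration of q points, the index
  k = p j + i (with i < p) of the lifted configuration carries \<zeta>^i r j, and an index k \<ge> p q
  (only k = p q occurs, when n = p q + 1) carries the origin.\<close>

definition root_lift :: "nat \<Rightarrow> nat \<Rightarrow> (nat \<Rightarrow> complex) \<Rightarrow> nat \<Rightarrow> complex" where
  "root_lift p q r k = (if k < p * q then zeta p ^ (k mod p) * r (k div p) else 0)"

lemma root_lift_power:
  assumes "k < p * q"
  shows "k div p < q" "root_lift p q r k ^ p = r (k div p) ^ p"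
proof -
  show "k div p < q"
    using assms by (simp add: less_mult_imp_div_less mult.commute)
  have "p \<noteq> 0"
    using assms by (cases "p = 0") auto
  then show "root_lift p q r k ^ p = r (k div p) ^ p"
    using assms power_zeta_power_mult by (simp add: root_lift_def)
qed

lemma root_lift_at:
  assumes "i < p" "j < q"
  shows "j * p + i < p * q" "root_lift p q r (j * p + i) = zeta p ^ i * r j"
proof -
  have "j * p + i < (j + 1) * p"
    using assms(1) by simp
  also have "\<dots> \<le> q * p"
    using assms(2) by (intro mult_right_mono) auto
  finally show "j * p + i < p * q"
    by (simp add: mult.commute)
  with assms(1) show "root_lift p q r (j * p + i) = zeta p ^ i * r j"
    by (simp add: root_lift_def)
qed

lemma inj_on_root_lift:
  assumes "inj_on (\<lambda>j. r j ^ p) {..<q}" "\<And>j. j < q \<Longrightarrow> r j \<noteq> 0" "n \<le> p * q + 1"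
  shows "inj_on (root_lift p q r) {..<n}"
proof (rule inj_onI)
  fix k l assume "k \<in> {..<n}" "l \<in> {..<n}" and eq: "root_lift p q r k = root_lift p q r l"
  consider "k < p * q" "l < p * q" | "k < p * q" "l \<ge> p * q" | "k \<ge> p * q" "l < p * q"
    | "k \<ge> p * q" "l \<ge> p * q"
    by linarith
  then show "k = l"
  proof cases
    case 1
    then have "r (k div p) ^ p = r (l div p) ^ p"
      using eq root_lift_power(2)[OF 1(1), of r] root_lift_power(2)[OF 1(2), of r] by simp
    then have div: "k div p = l div p"
      using assms(1) root_lift_power(1)[OF 1(1)] root_lift_power(1)[OF 1(2)] by (auto dest: inj_onD)
    then have "zeta p ^ (k mod p) = zeta p ^ (l mod p)"
      using eq 1 assms(2) root_lift_power(1)[OF 1(1)] by (simp add: root_lift_def)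
    moreover have "p \<noteq> 0"
      using 1 by (cases "p = 0") auto
    ultimately have "k mod p = l mod p"
      by (intro zeta_power_inj) auto
    with div show ?thesis
      by (metis div_mult_mod_eq)
  next
    case 2
    then show ?thesis
      using eq assms(2) root_lift_power(1)[OF 2(1)] by (simp add: root_lift_def)
  next
    case 3
    then show ?thesis
      using eq assms(2) root_lift_power(1)[OF 3(2)] by (simp add: root_lift_def)
  next
    case 4
    then show ?thesis
      using \<open>k \<in> {..<n}\<close> \<open>l \<in> {..<n}\<close> assms(3) by auto
  qed
qed

lemma image_root_lift:
  assumes "p \<noteq> 0" "\<And>j. j < q \<Longrightarrow> r j \<noteq> 0"
    and "n = p * q \<and> Z = {} \<or> n = p * q + 1 \<and> Z = {0}"
  shows "root_lift p q r ` {..<n} = (\<lambda>z. z ^ p) -` ((\<lambda>j. r j ^ p) ` {..<q} \<union> Z)"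
proof (intro equalityI subsetI)
  fix z assume "z \<in> root_lift p q r ` {..<n}"
  then obtain k where "k < n" "z = root_lift p q r k"
    by blast
  show "z \<in> (\<lambda>z. z ^ p) -` ((\<lambda>j. r j ^ p) ` {..<q} \<union> Z)"
  proof (cases "k < p * q")
    case True
    then show ?thesis
      using root_lift_power[OF True] \<open>z = root_lift p q r k\<close> by auto
  next
    case False
    then show ?thesis
      using \<open>k < n\<close> \<open>z = root_lift p q r k\<close> assms(1,3) by (auto simp: root_lift_def)
  qed
next
  fix z assume z: "z \<in> (\<lambda>z. z ^ p) -` ((\<lambda>j. r j ^ p) ` {..<q} \<union> Z)"
  show "z \<in> root_lift p q r ` {..<n}"
  proof (cases "z ^ p \<in> (\<lambda>j. r j ^ p) ` {..<q}")
    case True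
    then obtain j where j: "j < q" "z ^ p = r j ^ p"
      by blast
    then obtain i where i: "i < p" "z = zeta p ^ i * r j"
      using power_eq_power_iff_zeta[OF assms(1) assms(2)[OF j(1)]] by blast
    have "j * p + i < n"
      using root_lift_at(1)[OF i(1) j(1)] assms(3) by auto
    with root_lift_at(2)[OF i(1) j(1)] i(2) show ?thesis
      by (metis image_eqI lessThan_iff)
  next
    case False
    then have "z = 0" "n = p * q + 1"
      using z assms(3) by auto
    then show ?thesis
      by (auto simp: root_lift_def intro!: image_eqI[of _ _ "p * q"])
  qed
qed

lemma local_continuous_roots:
  fixes w :: "'i \<Rightarrow> complex"
  assumes "p \<noteq> 0" "\<And>j. j \<in> J \<Longrightarrow> w j \<noteq> 0"
  obtains U r where "\<And>j. j \<in> J \<Longrightarrow> open (U j) \<and> w j \<in> U j \<and> 0 \<notin> U j \<and> continuous_on (U j) (r j)"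
    "\<And>j x. j \<in> J \<Longrightarrow> x \<in> U j \<Longrightarrow> r j x ^ p = x"
proof
  let ?U = "\<lambda>j. {x. 0 < Re (x / w j)}"
  let ?r = "\<lambda>j x. exp (Ln (w j) / of_nat p) * exp (Ln (x / w j) / of_nat p)"
  fix j assume j: "j \<in> J"
  have "continuous_on UNIV (\<lambda>x. Re (x / w j))"
    using assms(2)[OF j] by (intro continuous_intros) auto
  then have "open (?U j)"
    by (rule open_Collect_less[OF continuous_on_const])
  moreover have "continuous_on (?U j) (?r j)"
    using assms(1) by (intro continuous_intros) (auto simp: complex_nonpos_Reals_iff)
  ultimately show "open (?U j) \<and> w j \<in> ?U j \<and> 0 \<notin> ?U j \<and> continuous_on (?U j) (?r j)"
    using assms(2)[OF j] by auto
  fix x assume "x \<in> ?U j"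
  then have "x \<noteq> 0"
    by auto
  then have "?r j x ^ p = w j * (x / w j)"
    using assms(1) assms(2)[OF j] by (simp add: power_mult_distrib exp_Ln_divide_power)
  then show "?r j x ^ p = x"
    using assms(2)[OF j] by simp
qed

lemma continuous_map_root_lift:
  assumes "\<And>j. j \<in> {..<q} \<Longrightarrow> continuous_on (U j) (r j)"
  shows "continuous_map (subtopology (ord_conf q Y) {g \<in> topspace (ord_conf q Y). \<forall>j\<in>{..<q}. g j \<in> U j})
    euclidean (\<lambda>g. root_lift p q (\<lambda>j. r j (g j)) k)"
proof (cases "k < p * q")
  case True
  with root_lift_power(1)[OF True] assms
  have "continuous_map (subtopology (ord_conf q Y) {g \<in> topspace (ord_conf q Y). \<forall>j\<in>{..<q}. g j \<in> U j})
      euclidean (\<lambda>g. zeta p ^ (k mod p) * r (k div p) (g (k div p)))"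
    by (intro continuous_map_ord_conf_coordinate_compose continuous_intros) auto
  with True show ?thesis
    by (simp add: root_lift_def)
qed (simp add: root_lift_def)

lemma power_vimage_local_lift:
  fixes g0 :: "nat \<Rightarrow> complex"
  assumes "p \<noteq> 0" and Z: "n = p * q \<and> Z = {} \<or> n = p * q + 1 \<and> Z = {0}"
    and g0: "g0 \<in> topspace (ord_conf q (- {0}))"
  obtains W h where "openin (ord_conf q (- {0})) W" "g0 \<in> W"
    "continuous_map (subtopology (ord_conf q (- {0})) W) (ord_conf n UNIV) h"
    "\<And>g. g \<in> W \<Longrightarrow> h g ` {..<n} = (\<lambda>z. z ^ p) -` (g ` {..<q} \<union> Z)"
proof -
  let ?Y = "ord_conf q (- {0 :: complex})"
  have "g0 j \<noteq> 0" if "j \<in> {..<q}" for j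
    using PiE_mem[of g0 "{..<q}" "\<lambda>_. - {0}" j] g0 that by (simp add: topspace_ord_conf)
  then obtain U r
    where U: "\<And>j. j \<in> {..<q} \<Longrightarrow> open (U j) \<and> g0 j \<in> U j \<and> 0 \<notin> U j \<and> continuous_on (U j) (r j)"
      and r: "\<And>j x. j \<in> {..<q} \<Longrightarrow> x \<in> U j \<Longrightarrow> r j x ^ p = x"
    using local_continuous_roots[OF assms(1)] by blast
  define W where "W = {g \<in> topspace ?Y. \<forall>j\<in>{..<q}. g j \<in> U j}"
  define h where "h g = restrict (root_lift p q (\<lambda>j. r j (g j))) {..<n}" for g
  have root: "r j (g j) ^ p = g j" "r j (g j) \<noteq> 0" if "g \<in> W" "j < q" for g j
  proof -
    have "g j \<in> U j"
      using that by (simp add: W_def)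
    with r U that(2) have "r j (g j) ^ p = g j" "g j \<noteq> 0"
      by auto
    with assms(1) show "r j (g j) ^ p = g j" "r j (g j) \<noteq> 0"
      by (auto simp: power_0_left)
  qed
  have "openin ?Y W"
    unfolding W_def using U by (intro openin_ord_conf_coordinates_in) auto
  moreover have "g0 \<in> W"
    using g0 U by (auto simp: W_def)
  moreover have "continuous_map (subtopology ?Y W) (ord_conf n UNIV) h"
    unfolding h_def
  proof (rule continuous_map_into_ord_conf)
    fix k
    have "continuous_map (subtopology ?Y W) euclidean (\<lambda>g. root_lift p q (\<lambda>j. r j (g j)) k)"
      unfolding W_def using U by (intro continuous_map_root_lift) blast
    then show "continuous_map (subtopology ?Y W) (top_of_set UNIV) (\<lambda>g. root_lift p q (\<lambda>j. r j (g j)) k)"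
      by simp
  next
    fix g assume "g \<in> topspace (subtopology ?Y W)"
    then have "g \<in> W" "inj_on g {..<q}"
      by (auto simp: W_def topspace_ord_conf)
    then show "inj_on (root_lift p q (\<lambda>j. r j (g j))) {..<n}"
      using root Z by (intro inj_on_root_lift) (auto simp: inj_on_def)
  qed
  moreover have "h g ` {..<n} = (\<lambda>z. z ^ p) -` (g ` {..<q} \<union> Z)" if "g \<in> W" for g
    using image_root_lift[OF assms(1) _ Z, of "\<lambda>j. r j (g j)"] root[OF that] by (simp add: h_def)
  ultimately show ?thesis
    using that by blast
qed

lemma continuous_map_power_vimage:
  fixes Z :: "complex set"
  assumes "p \<noteq> 0" "n = p * q \<and> Z = {} \<or> n = p * q + 1 \<and> Z = {0}"
  shows "continuous_map (unord_conf q (- {0})) (unord_conf n UNIV) (\<lambda>T. (\<lambda>z. z ^ p) -` (T \<union> Z))"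
proof -
  have "continuous_map (ord_conf q (- {0})) (unord_conf n UNIV) (\<lambda>g. (\<lambda>z. z ^ p) -` (g ` {..<q} \<union> Z))"
    unfolding unord_conf_def[of n]
  proof (rule continuous_map_into_quotient_topology_of)
    fix g0 assume "g0 \<in> topspace (ord_conf q (- {0 :: complex}))"
    from power_vimage_local_lift[OF assms this] show "\<exists>W h. openin (ord_conf q (- {0})) W \<and> g0 \<in> W \<and>
        continuous_map (subtopology (ord_conf q (- {0})) W) (ord_conf n UNIV) h \<and>
        (\<forall>g\<in>W. h g ` {..<n} = (\<lambda>z. z ^ p) -` (g ` {..<q} \<union> Z))"
      by metis
  qed
  then show ?thesis
    using continuous_compose_quotient_map_eq[OF quotient_map_quotient_topology_of,
        where g = "\<lambda>T. (\<lambda>z. z ^ p) -` (T \<union> Z)"]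
    unfolding unord_conf_def[of q] o_def by blast
qed

lemma homeomorphic_maps_invariant_unord_conf:
  fixes Z :: "complex set"
  assumes p: "2 \<le> p" and Z: "n = p * q \<and> Z = {} \<or> n = p * q + 1 \<and> Z = {0}"
  defines "V \<equiv> topspace (unord_conf n UNIV) \<inter> {S. (\<lambda>z. zeta p * z) ` S = S}"
  shows "homeomorphic_maps (subtopology (unord_conf n UNIV) V) (unord_conf q (- {0}))
      (\<lambda>S. (\<lambda>z. z ^ p) ` S - {0}) (\<lambda>T. (\<lambda>z. z ^ p) -` (T \<union> Z))"
  unfolding homeomorphic_maps_def
proof (intro conjI ballI)
  have n: "n = p * q \<or> n = p * q + 1"
    using Z by blast
  have "closedin (unord_conf n UNIV) V"
    unfolding V_def by (intro closedin_unord_conf_invariant continuous_intros) (auto simp: inj_on_def)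
  then show "continuous_map (subtopology (unord_conf n UNIV) V) (unord_conf q (- {0}))
      (\<lambda>S. (\<lambda>z. z ^ p) ` S - {0})"
    using card_invariant_configuration(1)[OF p n]
    by (intro continuous_map_unord_conf_image_minus continuous_intros) (auto simp: V_def topspace_unord_conf)
  have G: "continuous_map (unord_conf q (- {0})) (unord_conf n UNIV) (\<lambda>T. (\<lambda>z. z ^ p) -` (T \<union> Z))"
    using continuous_map_power_vimage[OF _ Z] p by simp
  have invariant: "(\<lambda>z. zeta p * z) ` ((\<lambda>z. z ^ p) -` (T \<union> Z)) = (\<lambda>z. z ^ p) -` (T \<union> Z)" for T
    by (rule zeta_invariant_vimage_power) (use p in simp)
  from continuous_map_image_subset_topspace[OF G]
  have "(\<lambda>T. (\<lambda>z. z ^ p) -` (T \<union> Z)) ` topspace (unord_conf q (- {0})) \<subseteq> V"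
    unfolding V_def image_subset_iff using invariant by (simp del: vimage_Un)
  with G show "continuous_map (unord_conf q (- {0})) (subtopology (unord_conf n UNIV) V)
      (\<lambda>T. (\<lambda>z. z ^ p) -` (T \<union> Z))"
    by (simp add: continuous_map_in_subtopology image_subset_iff_funcset)
next
  fix S assume "S \<in> topspace (subtopology (unord_conf n UNIV) V)"
  then show "(\<lambda>z. z ^ p) -` ((\<lambda>z. z ^ p) ` S - {0} \<union> Z) = S"
    using vimage_power_image_invariant_configuration[OF p Z] by (auto simp: V_def topspace_unord_conf)
next
  fix T assume "T \<in> topspace (unord_conf q (- {0 :: complex}))"
  then have "0 \<notin> T"
    by (auto simp: topspace_unord_conf)
  then show "(\<lambda>z. z ^ p) ` ((\<lambda>z. z ^ p) -` (T \<union> Z)) - {0} = T"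
    by (rule power_image_vimage[rotated]) (use p Z in auto)
qed

theorem mainTheorem11:
  fixes p q n :: nat
  assumes "prime p" and "n = p * q \<or> n = p * q + 1"
  shows "subtopology (unord_conf n (UNIV :: complex set))
           {S. (\<lambda>z. exp (2 * of_real pi * \<i> / of_nat p) * z) ` S = S}
         homeomorphic_space unord_conf q (- {0 :: complex})"
proof -
  have p: "2 \<le> p"
    using assms(1) prime_ge_2_nat by blast
  define Z :: "complex set" where "Z = (if n = p * q then {} else {0})"
  have "n = p * q \<and> Z = {} \<or> n = p * q + 1 \<and> Z = {0}"
    using assms(2) by (auto simp: Z_def)
  from homeomorphic_maps_invariant_unord_conf[OF p this]
  show ?thesis
    by (simp add: zeta_def subtopology_restrict homeomorphic_maps_imp_homeomorphic_space)
qed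

end
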